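(* Let $L\in\mathbb{N}$, $\alpha>0$, and let $R_1,\dots,R_L$ be independent random variables where $R_\ell$ has PDF $$f_{R_\ell}(r)=\alpha\exp\Big(-\frac{r^\alpha}{\hat r_\ell^\alpha}\Big)\sum_{i=0}^\infty\frac{\varphi_{i,\ell}\,r^{\alpha(i+T_\ell)-1}}{\hat r_\ell^{\alpha(i+T_\ell)}\Gamma(i+T_\ell)},\qquad r\ge0,$$ with $T_\ell,\hat r_\ell>0$ and $\varphi_{i,\ell}\in\mathbb{R}$. Let $R=\sum_{\ell=1}^LR_\ell$. Define, for $i\ge0$, $$\lambda_{i,\ell}=\frac{\Gamma(\alpha(i+T_\ell))}{\hat r_\ell^{\alpha i}}\sum_{j=0}^i\frac{(-1)^{i-j}\varphi_{j,\ell}}{(i-j)!\,\Gamma(j+T_\ell)},$$ $\phi_{0,\ell}=\lambda_{1,\ell}/\lambda_{0,\ell}$, $\phi_{h,\ell}=\frac{1}{\lambda_{0,\ell}}\big[(h+1)\lambda_{h+1,\ell}-\sum_{t=1}^h\lambda_{t,\ell}\phi_{h-t,\ell}\big]$ for $h\ge1$, $\delta_0=\prod_{\ell=1}^L\lambda_{0,\ell}$ and $\delta_i=\frac1i\sum_{h=1}^i\delta_{i-h}\sum_{\ell=1}^L\phi_{h-1,\ell}$ for $i\ge1$. Then for $r\ge 0$ $$f_R(r)=\alpha^L\Big(\prod_{\ell=1}^L\hat r_\ell^{-\alpha T_\ell}\Big)\sum_{i=0}^\infty\frac{\delta_i\,r^{-1+\alpha i+\alpha\sum_{\ell}T_\ell}}{\Gamma(i\alpha+\alpha\sum_\ell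 T_\ell)},\qquad F_R(r)=\alpha^L\Big(\prod_{\ell=1}^L\hat r_\ell^{-\alpha T_\ell}\Big)\sum_{i=0}^\infty\frac{\delta_i\,r^{\alpha i+\alpha\sum_\ell T_\ell}}{\Gamma(1+i\alpha+\alpha\sum_\ell T_\ell)}.$$
   Context: $\Gamma$ is the gamma function; sums over $\ell$ run from $1$ to $L$. The given $f_{R_\ell}$ are assumed to be valid (absolutely convergent) probability densities; the $R_\ell$ need not be identically distributed. *)

theory Defs
  imports "HOL-Probability.Probability"
begin

text \<open>The coefficients lambda_{i,l}, for a single index l with parameters
  T = T_l, rh = hat r_l, ph = (\<lambda>j. varphi_{j,l}).\<close>
definition lam_coef :: "real \<Rightarrow> real \<Rightarrow> real \<Rightarrow> (nat \<Rightarrow> real) \<Rightarrow> nat \<Rightarrow> real" where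
  "lam_coef \<alpha> T rh ph i =
     Gamma (\<alpha> * (real i + T)) / rh powr (\<alpha> * real i) *
     (\<Sum>j\<le>i. (-1) ^ (i - j) * ph j / (fact (i - j) * Gamma (real j + T)))"

function phi_coef :: "(nat \<Rightarrow> real) \<Rightarrow> nat \<Rightarrow> real" where
  "phi_coef lam h =
     (if h = 0 then lam 1 / lam 0
      else (1 / lam 0) * (real (h + 1) * lam (h + 1) - (\<Sum>t=1..h. lam t * phi_coef lam (h - t))))"
  by auto
termination by (relation "Wellfounded.measure snd") auto

text \<open>delta_i given delta_0 = d0 and Phi h = sum over l of phi_{h,l}.\<close>
function delta_coef :: "real \<Rightarrow> (nat \<Rightarrow> real) \<Rightarrow> nat \<Rightarrow> real" where
  "delta_coef d0 Phi i =
     (if i = 0 then d0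
      else (1 / real i) * (\<Sum>h=1..i. delta_coef d0 Phi (i - h) * Phi (h - 1)))"
  by auto
termination by (relation "Wellfounded.measure (\<lambda>(_, _, i). i)") auto

definition pdf_l :: "real \<Rightarrow> real \<Rightarrow> real \<Rightarrow> (nat \<Rightarrow> real) \<Rightarrow> real \<Rightarrow> real" where
  "pdf_l \<alpha> T rh ph r =
     \<alpha> * exp (- (r powr \<alpha>) / (rh powr \<alpha>)) *
     (\<Sum>i. ph i * r powr (\<alpha> * (real i + T) - 1) / (rh powr (\<alpha> * (real i + T)) * Gamma (real i + T)))"

end

theory Submission
  imports Defs "HOL-Computational_Algebra.Formal_Power_Series"
begin

(*
  Call sum_i a_i r^(alpha i + s - 1) / Gamma(alpha i + s) a Gamma series with coefficients a and
  shift s. Multiplying the exponential factor of f_{R_l} into its series (a Cauchy product) shows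
  that f_{R_l} is the Gamma series with shift alpha T_l and coefficients
  alpha rh_l^(-alpha T_l) lambda_{i,l}.

  The Beta integral turns the convolution of r^(p-1)/Gamma(p) and r^(q-1)/Gamma(q) into
  r^(p+q-1)/Gamma(p+q). Hence the convolution of two absolutely convergent Gamma series is the
  Gamma series whose shift is the sum of the shifts and whose coefficients are the Cauchy product of
  the coefficients; absolute convergence, with a Beta kernel as majorant, justifies integrating term
  by term. By independence the density of R is the Gamma series with shift alpha (T_1 + ... + T_L)
  and coefficients C delta_i, where C is the constant of the statement and delta_i are the
  coefficients of D(z) = prod_l Lambda_l(z), Lambda_l(z) = sum_i lambda_{i,l} z^i.
  The phi_{h,l} are the coefficients of Lambda_l'/Lambda_l, so
  D' = D sum_l Lambda_l'/Lambda_l, and comparing coefficients gives the recursion for delta_i.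
  Integrating the density term by term raises the shift by one and yields F_R.
*)

(* The recursive equations would be unfolded indefinitely by the simplifier. *)
declare phi_coef.simps [simp del] delta_coef.simps [simp del]

section \<open>Coefficients of products of power series\<close>

lemma fps_deriv_eq_mult_phi_coef:
  fixes lam :: "nat \<Rightarrow> real"
  assumes "lam 0 \<noteq> 0"
  shows "fps_deriv (Abs_fps lam) = Abs_fps lam * Abs_fps (phi_coef lam)"
proof (rule fps_ext)
  fix n
  have "fps_nth (Abs_fps lam * Abs_fps (phi_coef lam)) n
      = lam 0 * phi_coef lam n + (\<Sum>i=1..n. lam i * phi_coef lam (n - i))"
    by (simp add: fps_mult_nth sum.atLeast_Suc_atMost)
  also have "\<dots> = real (n + 1) * lam (n + 1)"
  proof (cases "n = 0")
    case True
    then show ?thesis using assms by (simp add: phi_coef.simps[of lam 0])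
  next
    case False
    then show ?thesis using assms by (simp add: phi_coef.simps[of lam n] field_simps)
  qed
  finally show "fps_nth (fps_deriv (Abs_fps lam)) n = fps_nth (Abs_fps lam * Abs_fps (phi_coef lam)) n"
    by simp
qed

lemma fps_deriv_prod_eq_mult_sum:
  fixes F P :: "'b \<Rightarrow> 'a::comm_ring_1 fps"
  assumes "finite I" "\<And>l. l \<in> I \<Longrightarrow> fps_deriv (F l) = F l * P l"
  shows "fps_deriv (\<Prod>l\<in>I. F l) = (\<Prod>l\<in>I. F l) * (\<Sum>l\<in>I. P l)"
  using assms by (induction I rule: finite_induct) (simp_all add: fps_deriv_mult algebra_simps)

lemma fps_nth_zero_prod:
  fixes F :: "'b \<Rightarrow> 'a::comm_ring_1 fps"
  shows "fps_nth (\<Prod>l\<in>I. F l) 0 = (\<Prod>l\<in>I. fps_nth (F l) 0)"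
  by (induction I rule: infinite_finite_induct) simp_all

lemma fps_const_prod:
  fixes c :: "'b \<Rightarrow> 'a::comm_ring_1"
  shows "(\<Prod>l\<in>I. fps_const (c l)) = fps_const (\<Prod>l\<in>I. c l)"
  by (induction I rule: infinite_finite_induct) (simp_all add: fps_const_mult)

lemma fps_nth_eq_delta_coef:
  fixes D S :: "real fps"
  assumes "fps_deriv D = D * S" "fps_nth D 0 = d0"
  shows "fps_nth D i = delta_coef d0 (fps_nth S) i"
proof (induction i rule: less_induct)
  case (less i)
  show ?case
  proof (cases "i = 0")
    case True
    then show ?thesis using assms(2) by (subst delta_coef.simps) simp
  next
    case False
    have "real i * fps_nth D i = fps_nth (fps_deriv D) (i - 1)"
      using False by simp
    also have "\<dots> = (\<Sum>k=0..i-1. fps_nth D k * fps_nth S (i - 1 - k))"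
      by (simp add: assms(1) fps_mult_nth)
    also have "\<dots> = (\<Sum>h=1..i. fps_nth D (i - h) * fps_nth S (h - 1))"
      by (rule sum.reindex_bij_witness[of _ "\<lambda>h. i - h" "\<lambda>k. i - k"]) (use False in auto)
    also have "\<dots> = (\<Sum>h=1..i. delta_coef d0 (fps_nth S) (i - h) * fps_nth S (h - 1))"
      using less False by (intro sum.cong) auto
    finally show ?thesis
      using False by (subst delta_coef.simps) (simp add: field_simps)
  qed
qed

lemma fps_nth_prod_eq_delta_coef:
  fixes lam :: "'b \<Rightarrow> nat \<Rightarrow> real"
  assumes "finite I" "\<And>l. l \<in> I \<Longrightarrow> lam l 0 \<noteq> 0"
  shows "fps_nth (\<Prod>l\<in>I. Abs_fps (lam l)) i
           = delta_coef (\<Prod>l\<in>I. lam l 0) (\<lambda>h. \<Sum>l\<in>I. phi_coef (lam l) h) i"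
proof -
  have "fps_deriv (\<Prod>l\<in>I. Abs_fps (lam l))
      = (\<Prod>l\<in>I. Abs_fps (lam l)) * (\<Sum>l\<in>I. Abs_fps (phi_coef (lam l)))"
    using assms by (intro fps_deriv_prod_eq_mult_sum fps_deriv_eq_mult_phi_coef)
  then have "fps_nth (\<Prod>l\<in>I. Abs_fps (lam l)) i
      = delta_coef (\<Prod>l\<in>I. lam l 0) (fps_nth (\<Sum>l\<in>I. Abs_fps (phi_coef (lam l)))) i"
    by (rule fps_nth_eq_delta_coef) (simp add: fps_nth_zero_prod)
  also have "fps_nth (\<Sum>l\<in>I. Abs_fps (phi_coef (lam l))) = (\<lambda>h. \<Sum>l\<in>I. phi_coef (lam l) h)"
    by (simp add: fun_eq_iff fps_sum_nth)
  finally show ?thesis .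
qed

lemma fps_nth_prod_Abs_fps_cmult:
  fixes c :: "'b \<Rightarrow> 'a::comm_ring_1"
  shows "fps_nth (\<Prod>l\<in>I. Abs_fps (\<lambda>i. c l * f l i)) n = (\<Prod>l\<in>I. c l) * fps_nth (\<Prod>l\<in>I. Abs_fps (f l)) n"
proof -
  have "Abs_fps (\<lambda>i. c l * f l i) = fps_const (c l) * Abs_fps (f l)" for l
    by (simp add: fps_ext)
  then show ?thesis
    by (simp add: prod.distrib fps_const_prod)
qed

lemma fps_nth_prod_cmult_eq_delta_coef:
  fixes lam :: "'b \<Rightarrow> nat \<Rightarrow> real"
  assumes "finite I" "\<And>l. l \<in> I \<Longrightarrow> lam l 0 \<noteq> 0"
  shows "fps_nth (\<Prod>l\<in>I. Abs_fps (\<lambda>i. c l * lam l i)) i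
           = (\<Prod>l\<in>I. c l) * delta_coef (\<Prod>l\<in>I. lam l 0) (\<lambda>h. \<Sum>l\<in>I. phi_coef (lam l) h) i"
  using fps_nth_prod_eq_delta_coef[of I lam, OF assms] by (simp add: fps_nth_prod_Abs_fps_cmult)

section \<open>Gamma series\<close>

definition gamma_series_term :: "real \<Rightarrow> (nat \<Rightarrow> real) \<Rightarrow> real \<Rightarrow> real \<Rightarrow> nat \<Rightarrow> real" where
  "gamma_series_term \<alpha> a s r i = a i * r powr (\<alpha> * real i + s - 1) / Gamma (\<alpha> * real i + s)"

definition gamma_series :: "real \<Rightarrow> (nat \<Rightarrow> real) \<Rightarrow> real \<Rightarrow> real \<Rightarrow> real" where
  "gamma_series \<alpha> a s r = (\<Sum>i. gamma_series_term \<alpha> a s r i)"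

definition gamma_series_abs_summable :: "real \<Rightarrow> (nat \<Rightarrow> real) \<Rightarrow> real \<Rightarrow> bool" where
  "gamma_series_abs_summable \<alpha> a s \<longleftrightarrow> (\<forall>r>0. summable (\<lambda>i. \<bar>gamma_series_term \<alpha> a s r i\<bar>))"

lemma gamma_series_term_at_0 [simp]: "gamma_series_term \<alpha> a s 0 i = 0"
  by (simp add: gamma_series_term_def)

(* As 0 powr x = 0 for every x, a Gamma series vanishes at 0 whatever its shift. *)
lemma gamma_series_at_0 [simp]: "gamma_series \<alpha> a s 0 = 0"
  by (simp add: gamma_series_def)

lemma Gamma_affine_pos: "\<alpha> \<ge> 0 \<Longrightarrow> s > 0 \<Longrightarrow> Gamma (\<alpha> * real i + s) > 0"
  by (intro Gamma_real_pos add_nonneg_pos) simp_all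

lemma abs_gamma_series_term:
  assumes "\<alpha> \<ge> 0" "s > 0" "r \<ge> 0"
  shows "\<bar>gamma_series_term \<alpha> a s r i\<bar> = gamma_series_term \<alpha> (\<lambda>i. \<bar>a i\<bar>) s r i"
  using Gamma_affine_pos[OF assms(1,2), of i] by (simp add: gamma_series_term_def abs_mult)

lemma gamma_series_term_nonneg:
  assumes "\<alpha> \<ge> 0" "s > 0" "a i \<ge> 0"
  shows "gamma_series_term \<alpha> a s r i \<ge> 0"
  using Gamma_affine_pos[OF assms(1,2), of i] assms(3) by (simp add: gamma_series_term_def)

lemma gamma_series_abs_summable_abs:
  assumes "\<alpha> \<ge> 0" "s > 0" "gamma_series_abs_summable \<alpha> a s"
  shows "gamma_series_abs_summable \<alpha> (\<lambda>i. \<bar>a i\<bar>) s"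
  using assms by (simp add: gamma_series_abs_summable_def abs_gamma_series_term)

lemma summable_norm_gamma_series_term:
  assumes "gamma_series_abs_summable \<alpha> a s" "r \<ge> 0"
  shows "summable (\<lambda>i. norm (gamma_series_term \<alpha> a s r i))"
  using assms by (cases "r = 0") (auto simp: gamma_series_abs_summable_def)

lemma summable_gamma_series_term:
  assumes "gamma_series_abs_summable \<alpha> a s" "r \<ge> 0"
  shows "summable (gamma_series_term \<alpha> a s r)"
  using summable_norm_gamma_series_term[OF assms] by (rule summable_norm_cancel)

lemma gamma_series_nonneg:
  assumes "\<alpha> \<ge> 0" "s > 0" "gamma_series_abs_summable \<alpha> a s" "r \<ge> 0" "\<And>i. a i \<ge> 0"
  shows "gamma_series \<alpha> a s r \<ge> 0"
  unfolding gamma_series_def using assms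
  by (intro suminf_nonneg summable_gamma_series_term gamma_series_term_nonneg) auto

lemma gamma_series_term_abs_le:
  assumes "\<alpha> \<ge> 0" "s > 0" "0 < z" "z \<le> x"
  shows "gamma_series_term \<alpha> (\<lambda>i. \<bar>a i\<bar>) s z i
           \<le> gamma_series_term \<alpha> (\<lambda>i. \<bar>a i\<bar>) s x i * (z / x) powr (s - 1)"
proof -
  have "z powr (\<alpha> * real i + s - 1) = z powr (\<alpha> * real i) * z powr (s - 1)"
    by (simp add: powr_add[symmetric] add_diff_eq)
  also have "\<dots> \<le> x powr (\<alpha> * real i) * z powr (s - 1)"
    using assms by (intro mult_right_mono powr_mono2) auto
  also have "\<dots> = x powr (\<alpha> * real i) * x powr (s - 1) * (z / x) powr (s - 1)"
    using assms by (simp add: powr_divide)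
  also have "\<dots> = x powr (\<alpha> * real i + s - 1) * (z / x) powr (s - 1)"
    by (simp add: powr_add[symmetric] add_diff_eq)
  finally show ?thesis
    using Gamma_affine_pos[OF assms(1,2), of i]
    by (simp add: gamma_series_term_def divide_right_mono mult_left_mono mult.assoc times_divide_eq_left)
qed

lemma gamma_series_abs_le:
  assumes "\<alpha> \<ge> 0" "s > 0" "gamma_series_abs_summable \<alpha> a s" "0 < z" "z \<le> x"
  shows "gamma_series \<alpha> (\<lambda>i. \<bar>a i\<bar>) s z \<le> gamma_series \<alpha> (\<lambda>i. \<bar>a i\<bar>) s x * (z / x) powr (s - 1)"
proof -
  have "summable (gamma_series_term \<alpha> (\<lambda>i. \<bar>a i\<bar>) s r)" if "r \<ge> 0" for r
    using assms that by (intro summable_gamma_series_term gamma_series_abs_summable_abs)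
  then show ?thesis
    using assms gamma_series_term_abs_le[OF assms(1,2,4,5)]
    unfolding gamma_series_def by (subst suminf_mult2) (auto intro!: suminf_le summable_mult2)
qed

lemma gamma_series_cmult:
  assumes "summable (gamma_series_term \<alpha> a s r)"
  shows "gamma_series \<alpha> (\<lambda>i. c * a i) s r = c * gamma_series \<alpha> a s r"
proof -
  have "gamma_series \<alpha> (\<lambda>i. c * a i) s r = (\<Sum>i. c * gamma_series_term \<alpha> a s r i)"
    by (simp add: gamma_series_def gamma_series_term_def mult.assoc)
  also have "\<dots> = c * gamma_series \<alpha> a s r"
    unfolding gamma_series_def by (rule suminf_mult[OF assms])
  finally show ?thesis .
qed

lemma gamma_series_abs_summable_cmult_iff:
  assumes "c \<noteq> 0"
  shows "gamma_series_abs_summable \<alpha> (\<lambda>i. c * a i) s \<longleftrightarrow> gamma_series_abs_summable \<alpha> a s"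
proof -
  have "\<bar>gamma_series_term \<alpha> (\<lambda>i. c * a i) s r i\<bar> = \<bar>c\<bar> * \<bar>gamma_series_term \<alpha> a s r i\<bar>" for r i
    by (simp add: gamma_series_term_def abs_mult)
  then show ?thesis
    using assms by (simp add: gamma_series_abs_summable_def summable_cmult_iff)
qed

lemma Gamma_add_one_pos: "(c::real) > 0 \<Longrightarrow> Gamma (c + 1) = c * Gamma c"
  by (rule Gamma_plus1) (auto dest: nonpos_Ints_nonpos)

lemma gamma_series_term_add_one:
  assumes "\<alpha> \<ge> 0" "s > 0" "r \<ge> 0"
  shows "gamma_series_term \<alpha> a (s + 1) r i = gamma_series_term \<alpha> a s r i * r / (\<alpha> * real i + s)"
proof -
  have c: "\<alpha> * real i + s > 0"
    using assms by (simp add: add_nonneg_pos)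
  show ?thesis
  proof (cases "r = 0")
    case False
    then have "r powr (\<alpha> * real i + s) = r powr (\<alpha> * real i + s - 1) * r"
      using assms by (simp add: powr_diff)
    then show ?thesis
      using c Gamma_add_one_pos[OF c] Gamma_real_pos[OF c]
      by (simp add: gamma_series_term_def add.assoc field_simps)
  qed simp
qed

lemma gamma_series_abs_summable_add_one:
  assumes "\<alpha> \<ge> 0" "s > 0" "gamma_series_abs_summable \<alpha> a s"
  shows "gamma_series_abs_summable \<alpha> a (s + 1)"
  unfolding gamma_series_abs_summable_def
proof (intro allI impI)
  fix r :: real
  assume "r > 0"
  show "summable (\<lambda>i. \<bar>gamma_series_term \<alpha> a (s + 1) r i\<bar>)"
  proof (rule summable_comparison_test')
    show "summable (\<lambda>i. \<bar>gamma_series_term \<alpha> a s r i\<bar> * (r / s))"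
      using assms \<open>r > 0\<close> by (intro summable_mult2) (auto simp: gamma_series_abs_summable_def)
    have "\<bar>gamma_series_term \<alpha> a s r i\<bar> * r / (\<alpha> * real i + s) \<le> \<bar>gamma_series_term \<alpha> a s r i\<bar> * (r / s)" for i
      using assms \<open>r > 0\<close> by (simp add: divide_left_mono mult_left_mono add_nonneg_pos mult_nonneg_nonneg)
    then show "norm \<bar>gamma_series_term \<alpha> a (s + 1) r i\<bar> \<le> \<bar>gamma_series_term \<alpha> a s r i\<bar> * (r / s)" for i
      using assms \<open>r > 0\<close>
      by (simp add: gamma_series_term_add_one abs_mult abs_divide add_nonneg_pos)
  qed
qed

section \<open>Convolution of Gamma series\<close>

lemma Beta_kernel_rescale:
  fixes p q x t :: real
  assumes "x > 0"
  shows "ennreal ((x - x * t) powr (p - 1) * (x * t) powr (q - 1) * indicator {0..x} (x * t))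
           = ennreal (x powr (p - 1) * x powr (q - 1))
             * (ennreal (t powr (q - 1) * (1 - t) powr (p - 1)) * indicator {0..1} t)"
proof (cases "t \<in> {0..1}")
  case True
  then have "x * t \<in> {0..x}"
    using assms by (auto simp: mult_le_cancel_left1)
  moreover have "(x - x * t) powr (p - 1) = x powr (p - 1) * (1 - t) powr (p - 1)"
    using True assms by (subst powr_mult[symmetric]) (auto simp: algebra_simps)
  moreover have "(x * t) powr (q - 1) = x powr (q - 1) * t powr (q - 1)"
    using True assms by (subst powr_mult) auto
  ultimately show ?thesis
    using True assms by (simp add: ennreal_mult'[symmetric] mult_ac)
next
  case False
  then have "x * t \<notin> {0..x}"
    using assms by (auto simp: zero_le_mult_iff mult_le_cancel_left1)
  then show ?thesis
    using False by simp
qed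

lemma nn_integral_Beta_kernel:
  fixes p q x :: real
  assumes "p > 0" "q > 0" "x > 0"
  shows "(\<integral>\<^sup>+y. ennreal ((x - y) powr (p - 1) * y powr (q - 1) * indicator {0..x} y) \<partial>lborel)
           = ennreal (x powr (p + q - 1) * Beta p q)"
proof -
  have "(\<integral>\<^sup>+y. ennreal ((x - y) powr (p - 1) * y powr (q - 1) * indicator {0..x} y) \<partial>lborel)
      = ennreal x * (\<integral>\<^sup>+t. ennreal ((x - x * t) powr (p - 1) * (x * t) powr (q - 1)
                                      * indicator {0..x} (x * t)) \<partial>lborel)"
    using assms by (subst nn_integral_real_affine[where c=x and t=0]) auto
  also have "\<dots> = ennreal x * (ennreal (x powr (p - 1) * x powr (q - 1))
      * (\<integral>\<^sup>+t. ennreal (t powr (q - 1) * (1 - t) powr (p - 1)) * indicator {0..1} t \<partial>lborel))"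
    using assms by (simp add: Beta_kernel_rescale nn_integral_cmult)
  also have "(\<integral>\<^sup>+t. ennreal (t powr (q - 1) * (1 - t) powr (p - 1)) * indicator {0..1} t \<partial>lborel)
      = ennreal (Beta p q)"
    using nn_integral_has_integral_lebesgue'[OF _ has_integral_Beta_real[OF assms(2,1)]]
    by (simp add: Beta_commute)
  also have "ennreal x * (ennreal (x powr (p - 1) * x powr (q - 1)) * ennreal (Beta p q))
      = ennreal (x powr (p + q - 1) * Beta p q)"
  proof -
    have "x * (x powr (p - 1) * x powr (q - 1)) = x powr (p + q - 1)"
      using assms by (simp add: powr_add[symmetric] powr_mult_base)
    moreover have "Beta p q \<ge> 0"
      using assms by (simp add: Beta_def Gamma_real_pos less_imp_le)
    ultimately show ?thesis
      using assms by (simp add: ennreal_mult'[symmetric] ennreal_mult[symmetric] mult.assoc[symmetric])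
  qed
  finally show ?thesis .
qed

lemma Beta_kernel_integral:
  fixes p q x :: real
  assumes "p > 0" "q > 0" "x > 0"
  shows "integrable lborel (\<lambda>y. (x - y) powr (p - 1) * y powr (q - 1) * indicator {0..x} y)"
    and "integral\<^sup>L lborel (\<lambda>y. (x - y) powr (p - 1) * y powr (q - 1) * indicator {0..x} y)
           = x powr (p + q - 1) * Beta p q"
proof -
  have "Beta p q \<ge> 0"
    using assms by (simp add: Beta_def Gamma_real_pos less_imp_le)
  then have "integrable lborel (\<lambda>y. (x - y) powr (p - 1) * y powr (q - 1) * indicator {0..x} y)
    \<and> integral\<^sup>L lborel (\<lambda>y. (x - y) powr (p - 1) * y powr (q - 1) * indicator {0..x} y)
        = x powr (p + q - 1) * Beta p q"
    using nn_integral_Beta_kernel[OF assms] by (subst (asm) nn_integral_eq_integrable) auto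
  then show "integrable lborel (\<lambda>y. (x - y) powr (p - 1) * y powr (q - 1) * indicator {0..x} y)"
    and "integral\<^sup>L lborel (\<lambda>y. (x - y) powr (p - 1) * y powr (q - 1) * indicator {0..x} y)
           = x powr (p + q - 1) * Beta p q"
    by auto
qed

lemma gamma_series_term_convolution:
  assumes "\<alpha> \<ge> 0" "s > 0" "t > 0" "x > 0"
  shows "integrable lborel
           (\<lambda>y. gamma_series_term \<alpha> a s (x - y) i * gamma_series_term \<alpha> b t y j * indicator {0..x} y)"
    and "integral\<^sup>L lborel
           (\<lambda>y. gamma_series_term \<alpha> a s (x - y) i * gamma_series_term \<alpha> b t y j * indicator {0..x} y)
         = a i * b j * x powr (\<alpha> * real (i + j) + (s + t) - 1) / Gamma (\<alpha> * real (i + j) + (s + t))"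
proof -
  define p where "p = \<alpha> * real i + s"
  define q where "q = \<alpha> * real j + t"
  have "p > 0" "q > 0"
    using assms by (auto simp: p_def q_def add_nonneg_pos)
  then have Gamma_pos: "Gamma p > 0" "Gamma q > 0"
    by (auto intro: Gamma_real_pos)
  have eq: "(\<lambda>y. gamma_series_term \<alpha> a s (x - y) i * gamma_series_term \<alpha> b t y j * indicator {0..x} y)
      = (\<lambda>y. a i * b j / (Gamma p * Gamma q) * ((x - y) powr (p - 1) * y powr (q - 1) * indicator {0..x} y))"
    by (auto simp: gamma_series_term_def p_def q_def fun_eq_iff)
  show "integrable lborel
           (\<lambda>y. gamma_series_term \<alpha> a s (x - y) i * gamma_series_term \<alpha> b t y j * indicator {0..x} y)"
    unfolding eq using Beta_kernel_integral(1)[OF \<open>p > 0\<close> \<open>q > 0\<close> assms(4)]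
    by (rule integrable_mult_right)
  have "p + q = \<alpha> * real (i + j) + (s + t)"
    by (simp add: p_def q_def algebra_simps)
  then show "integral\<^sup>L lborel
           (\<lambda>y. gamma_series_term \<alpha> a s (x - y) i * gamma_series_term \<alpha> b t y j * indicator {0..x} y)
         = a i * b j * x powr (\<alpha> * real (i + j) + (s + t) - 1) / Gamma (\<alpha> * real (i + j) + (s + t))"
    unfolding eq integral_mult_right_zero Beta_kernel_integral(2)[OF \<open>p > 0\<close> \<open>q > 0\<close> assms(4)]
    using Gamma_pos by (simp add: Beta_def field_simps)
qed

lemma gamma_series_cauchy_term_integral:
  assumes "\<alpha> \<ge> 0" "s > 0" "t > 0" "x > 0"
  shows "integrable lborel (\<lambda>y. (\<Sum>i\<le>n. gamma_series_term \<alpha> a s (x - y) i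
                                    * gamma_series_term \<alpha> b t y (n - i)) * indicator {0..x} y)"
    and "integral\<^sup>L lborel (\<lambda>y. (\<Sum>i\<le>n. gamma_series_term \<alpha> a s (x - y) i
                                    * gamma_series_term \<alpha> b t y (n - i)) * indicator {0..x} y)
           = gamma_series_term \<alpha> (fps_nth (Abs_fps a * Abs_fps b)) (s + t) x n"
proof -
  have eq: "(\<lambda>y. (\<Sum>i\<le>n. gamma_series_term \<alpha> a s (x - y) i
                          * gamma_series_term \<alpha> b t y (n - i)) * indicator {0..x} y)
      = (\<lambda>y. \<Sum>i\<le>n. gamma_series_term \<alpha> a s (x - y) i
                     * gamma_series_term \<alpha> b t y (n - i) * indicator {0..x} y)"
    by (simp add: sum_distrib_right)
  show "integrable lborel (\<lambda>y. (\<Sum>i\<le>n. gamma_series_term \<alpha> a s (x - y) i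
                                    * gamma_series_term \<alpha> b t y (n - i)) * indicator {0..x} y)"
    unfolding eq by (intro Bochner_Integration.integrable_sum gamma_series_term_convolution(1)[OF assms])
  have "integral\<^sup>L lborel (\<lambda>y. (\<Sum>i\<le>n. gamma_series_term \<alpha> a s (x - y) i
                                    * gamma_series_term \<alpha> b t y (n - i)) * indicator {0..x} y)
      = (\<Sum>i\<le>n. a i * b (n - i) * x powr (\<alpha> * real n + (s + t) - 1) / Gamma (\<alpha> * real n + (s + t)))"
    unfolding eq using gamma_series_term_convolution[OF assms]
    by (subst Bochner_Integration.integral_sum) (auto intro!: sum.cong)
  also have "\<dots> = gamma_series_term \<alpha> (fps_nth (Abs_fps a * Abs_fps b)) (s + t) x n"
    by (simp add: gamma_series_term_def fps_mult_nth atLeast0AtMost sum_distrib_right sum_divide_distrib)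
  finally show "integral\<^sup>L lborel (\<lambda>y. (\<Sum>i\<le>n. gamma_series_term \<alpha> a s (x - y) i
                                    * gamma_series_term \<alpha> b t y (n - i)) * indicator {0..x} y)
           = gamma_series_term \<alpha> (fps_nth (Abs_fps a * Abs_fps b)) (s + t) x n" .
qed

lemma gamma_series_cauchy_term_sums:
  assumes "gamma_series_abs_summable \<alpha> a s" "gamma_series_abs_summable \<alpha> b t"
  shows "(\<lambda>n. (\<Sum>i\<le>n. gamma_series_term \<alpha> a s (x - y) i
                     * gamma_series_term \<alpha> b t y (n - i)) * indicator {0..x} y)
           sums (gamma_series \<alpha> a s (x - y) * gamma_series \<alpha> b t y * indicator {0..x} y)"
proof (cases "y \<in> {0..x}")
  case True
  then have "(\<lambda>n. \<Sum>i\<le>n. gamma_series_term \<alpha> a s (x - y) i * gamma_series_term \<alpha> b t y (n - i))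
      sums (gamma_series \<alpha> a s (x - y) * gamma_series \<alpha> b t y)"
    unfolding gamma_series_def using assms
    by (intro Cauchy_product_sums summable_norm_gamma_series_term) auto
  then show ?thesis
    using True by simp
qed simp

lemma gamma_series_abs_product_le_Beta_kernel:
  assumes "\<alpha> \<ge> 0" "s > 0" "t > 0" "gamma_series_abs_summable \<alpha> a s"
    "gamma_series_abs_summable \<alpha> b t" "x > 0"
  shows "gamma_series \<alpha> (\<lambda>i. \<bar>a i\<bar>) s (x - y) * gamma_series \<alpha> (\<lambda>i. \<bar>b i\<bar>) t y * indicator {0..x} y
           \<le> gamma_series \<alpha> (\<lambda>i. \<bar>a i\<bar>) s x * gamma_series \<alpha> (\<lambda>i. \<bar>b i\<bar>) t x
               / (x powr (s - 1) * x powr (t - 1))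
             * ((x - y) powr (s - 1) * y powr (t - 1) * indicator {0..x} y)"
proof (cases "y \<in> {0<..<x}")
  case True
  have "gamma_series \<alpha> (\<lambda>i. \<bar>a i\<bar>) s z \<ge> 0" "gamma_series \<alpha> (\<lambda>i. \<bar>b i\<bar>) t z \<ge> 0" if "z \<ge> 0" for z
    using assms that by (auto intro!: gamma_series_nonneg gamma_series_abs_summable_abs)
  then have "gamma_series \<alpha> (\<lambda>i. \<bar>a i\<bar>) s (x - y) * gamma_series \<alpha> (\<lambda>i. \<bar>b i\<bar>) t y
      \<le> gamma_series \<alpha> (\<lambda>i. \<bar>a i\<bar>) s x * ((x - y) / x) powr (s - 1)
        * (gamma_series \<alpha> (\<lambda>i. \<bar>b i\<bar>) t x * (y / x) powr (t - 1))"
    using True assms by (intro mult_mono gamma_series_abs_le) auto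
  then show ?thesis
    using True assms by (simp add: powr_divide field_simps)
next
  case False
  then have "y \<notin> {0..x} \<or> y = 0 \<or> y = x"
    by auto
  then show ?thesis
    by auto
qed

lemma sum_abs_gamma_series_cauchy_term_le_Beta_kernel:
  assumes "\<alpha> \<ge> 0" "s > 0" "t > 0" "gamma_series_abs_summable \<alpha> a s"
    "gamma_series_abs_summable \<alpha> b t" "x > 0"
  shows "(\<Sum>n<N. (\<Sum>i\<le>n. gamma_series_term \<alpha> (\<lambda>i. \<bar>a i\<bar>) s (x - y) i
                         * gamma_series_term \<alpha> (\<lambda>i. \<bar>b i\<bar>) t y (n - i)) * indicator {0..x} y)
           \<le> gamma_series \<alpha> (\<lambda>i. \<bar>a i\<bar>) s x * gamma_series \<alpha> (\<lambda>i. \<bar>b i\<bar>) t x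
               / (x powr (s - 1) * x powr (t - 1))
             * ((x - y) powr (s - 1) * y powr (t - 1) * indicator {0..x} y)"
proof -
  define w where "w n = (\<Sum>i\<le>n. gamma_series_term \<alpha> (\<lambda>i. \<bar>a i\<bar>) s (x - y) i
                          * gamma_series_term \<alpha> (\<lambda>i. \<bar>b i\<bar>) t y (n - i)) * indicator {0..x} y" for n
  have "(\<lambda>n. w n) sums (gamma_series \<alpha> (\<lambda>i. \<bar>a i\<bar>) s (x - y) * gamma_series \<alpha> (\<lambda>i. \<bar>b i\<bar>) t y
                         * indicator {0..x} y)"
    unfolding w_def using assms by (intro gamma_series_cauchy_term_sums gamma_series_abs_summable_abs)
  moreover have "w n \<ge> 0" for n
    unfolding w_def using assms by (intro mult_nonneg_nonneg sum_nonneg gamma_series_term_nonneg) auto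
  ultimately have "(\<Sum>n<N. w n) \<le> gamma_series \<alpha> (\<lambda>i. \<bar>a i\<bar>) s (x - y)
      * gamma_series \<alpha> (\<lambda>i. \<bar>b i\<bar>) t y * indicator {0..x} y"
    by (metis sum_le_suminf sums_summable sums_unique finite_lessThan)
  then show ?thesis
    unfolding w_def using gamma_series_abs_product_le_Beta_kernel[OF assms] by (rule order_trans)
qed

lemma gamma_series_cauchy_abs_summable:
  assumes "\<alpha> \<ge> 0" "s > 0" "t > 0" "gamma_series_abs_summable \<alpha> a s"
    "gamma_series_abs_summable \<alpha> b t" "x > 0"
  shows "summable (gamma_series_term \<alpha> (fps_nth (Abs_fps (\<lambda>i. \<bar>a i\<bar>) * Abs_fps (\<lambda>i. \<bar>b i\<bar>))) (s + t) x)"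
proof -
  define A where "A = (\<lambda>i. \<bar>a i\<bar>)"
  define B where "B = (\<lambda>i. \<bar>b i\<bar>)"
  define w where "w n y = (\<Sum>i\<le>n. gamma_series_term \<alpha> A s (x - y) i
                               * gamma_series_term \<alpha> B t y (n - i)) * indicator {0..x} y" for n y
  define h where "h y = gamma_series \<alpha> A s x * gamma_series \<alpha> B t x / (x powr (s - 1) * x powr (t - 1))
                          * ((x - y) powr (s - 1) * y powr (t - 1) * indicator {0..x} y)" for y
  have w_le_h: "(\<Sum>n<N. w n y) \<le> h y" for N y
    unfolding w_def h_def A_def B_def by (rule sum_abs_gamma_series_cauchy_term_le_Beta_kernel[OF assms])
  have int_h: "integrable lborel h"
    unfolding h_def using Beta_kernel_integral(1)[OF assms(2,3,6)] by (rule integrable_mult_right)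
  have int_w: "integrable lborel (w n)"
    and integral_w: "integral\<^sup>L lborel (w n)
      = gamma_series_term \<alpha> (fps_nth (Abs_fps A * Abs_fps B)) (s + t) x n" for n
    unfolding w_def by (rule gamma_series_cauchy_term_integral[OF assms(1-3,6)])+
  have bounded: "(\<Sum>n<N. gamma_series_term \<alpha> (fps_nth (Abs_fps A * Abs_fps B)) (s + t) x n)
      \<le> integral\<^sup>L lborel h" for N
  proof -
    have "(\<Sum>n<N. gamma_series_term \<alpha> (fps_nth (Abs_fps A * Abs_fps B)) (s + t) x n)
        = integral\<^sup>L lborel (\<lambda>y. \<Sum>n<N. w n y)"
      using int_w by (simp add: integral_w Bochner_Integration.integral_sum)
    also have "\<dots> \<le> integral\<^sup>L lborel h"
      using int_w int_h w_le_h by (intro integral_mono Bochner_Integration.integrable_sum) auto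
    finally show ?thesis .
  qed
  have "gamma_series_term \<alpha> (fps_nth (Abs_fps A * Abs_fps B)) (s + t) x n \<ge> 0" for n
    using assms by (intro gamma_series_term_nonneg) (auto simp: A_def B_def fps_mult_nth intro!: sum_nonneg)
  then show ?thesis
    using bounded unfolding A_def B_def by (intro summableI_nonneg_bounded)
qed

lemma abs_gamma_series_term_mult_le:
  assumes "\<alpha> \<ge> 0" "s > 0" "t > 0" "x \<ge> 0"
  shows "\<bar>gamma_series_term \<alpha> (fps_nth (Abs_fps a * Abs_fps b)) (s + t) x n\<bar>
           \<le> gamma_series_term \<alpha> (fps_nth (Abs_fps (\<lambda>i. \<bar>a i\<bar>) * Abs_fps (\<lambda>i. \<bar>b i\<bar>))) (s + t) x n"
proof -
  have "\<bar>fps_nth (Abs_fps a * Abs_fps b) n\<bar> \<le> fps_nth (Abs_fps (\<lambda>i. \<bar>a i\<bar>) * Abs_fps (\<lambda>i. \<bar>b i\<bar>)) n"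
    unfolding fps_mult_nth by (rule order_trans[OF sum_abs]) (simp add: abs_mult)
  then show ?thesis
    using assms Gamma_affine_pos[of \<alpha> "s + t" n]
    by (auto simp: gamma_series_term_def abs_mult intro!: divide_right_mono mult_right_mono)
qed

lemma gamma_series_abs_summable_mult:
  assumes "\<alpha> \<ge> 0" "s > 0" "t > 0" "gamma_series_abs_summable \<alpha> a s" "gamma_series_abs_summable \<alpha> b t"
  shows "gamma_series_abs_summable \<alpha> (fps_nth (Abs_fps a * Abs_fps b)) (s + t)"
  unfolding gamma_series_abs_summable_def
proof (intro allI impI)
  fix x :: real
  assume "x > 0"
  show "summable (\<lambda>n. \<bar>gamma_series_term \<alpha> (fps_nth (Abs_fps a * Abs_fps b)) (s + t) x n\<bar>)"
  proof (rule summable_comparison_test')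
    show "summable (gamma_series_term \<alpha> (fps_nth (Abs_fps (\<lambda>i. \<bar>a i\<bar>) * Abs_fps (\<lambda>i. \<bar>b i\<bar>))) (s + t) x)"
      by (rule gamma_series_cauchy_abs_summable[OF assms \<open>x > 0\<close>])
    show "norm \<bar>gamma_series_term \<alpha> (fps_nth (Abs_fps a * Abs_fps b)) (s + t) x n\<bar>
        \<le> gamma_series_term \<alpha> (fps_nth (Abs_fps (\<lambda>i. \<bar>a i\<bar>) * Abs_fps (\<lambda>i. \<bar>b i\<bar>))) (s + t) x n" for n
      using abs_gamma_series_term_mult_le[OF assms(1-3)] \<open>x > 0\<close> by simp
  qed
qed

lemma abs_gamma_series_cauchy_term_le:
  assumes "\<alpha> \<ge> 0" "s > 0" "t > 0"
  shows "\<bar>(\<Sum>i\<le>n. gamma_series_term \<alpha> a s (x - y) i * gamma_series_term \<alpha> b t y (n - i)) * indicator {0..x} y\<bar>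
           \<le> (\<Sum>i\<le>n. gamma_series_term \<alpha> (\<lambda>i. \<bar>a i\<bar>) s (x - y) i
                     * gamma_series_term \<alpha> (\<lambda>i. \<bar>b i\<bar>) t y (n - i)) * indicator {0..x} y"
proof (cases "y \<in> {0..x}")
  case True
  then have "\<bar>(\<Sum>i\<le>n. gamma_series_term \<alpha> a s (x - y) i * gamma_series_term \<alpha> b t y (n - i))
               * indicator {0..x} y\<bar>
      \<le> (\<Sum>i\<le>n. \<bar>gamma_series_term \<alpha> a s (x - y) i * gamma_series_term \<alpha> b t y (n - i)\<bar>)"
    by (simp add: sum_abs)
  also have "\<dots> = (\<Sum>i\<le>n. gamma_series_term \<alpha> (\<lambda>i. \<bar>a i\<bar>) s (x - y) i
                     * gamma_series_term \<alpha> (\<lambda>i. \<bar>b i\<bar>) t y (n - i)) * indicator {0..x} y"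
    using True assms by (simp add: abs_mult abs_gamma_series_term)
  finally show ?thesis .
qed simp

lemma gamma_series_convolution:
  assumes "\<alpha> \<ge> 0" "s > 0" "t > 0" "gamma_series_abs_summable \<alpha> a s"
    "gamma_series_abs_summable \<alpha> b t" "x > 0"
  shows "integrable lborel (\<lambda>y. gamma_series \<alpha> a s (x - y) * gamma_series \<alpha> b t y * indicator {0..x} y)"
    and "integral\<^sup>L lborel (\<lambda>y. gamma_series \<alpha> a s (x - y) * gamma_series \<alpha> b t y * indicator {0..x} y)
           = gamma_series \<alpha> (fps_nth (Abs_fps a * Abs_fps b)) (s + t) x"
proof -
  define w where "w a b n y = (\<Sum>i\<le>n. gamma_series_term \<alpha> a s (x - y) i
                                 * gamma_series_term \<alpha> b t y (n - i)) * indicator {0..x} y" for a b n y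
  define A where "A = (\<lambda>i. \<bar>a i\<bar>)"
  define B where "B = (\<lambda>i. \<bar>b i\<bar>)"
  have int_w: "integrable lborel (w a b n)" "integrable lborel (w A B n)"
    and integral_w: "integral\<^sup>L lborel (w a b n)
                       = gamma_series_term \<alpha> (fps_nth (Abs_fps a * Abs_fps b)) (s + t) x n"
                    "integral\<^sup>L lborel (w A B n)
                       = gamma_series_term \<alpha> (fps_nth (Abs_fps A * Abs_fps B)) (s + t) x n" for n
    unfolding w_def by (rule gamma_series_cauchy_term_integral[OF assms(1-3,6)])+
  have abs_w: "\<bar>w a b n y\<bar> \<le> w A B n y" for n y
    unfolding w_def A_def B_def by (rule abs_gamma_series_cauchy_term_le[OF assms(1-3)])
  have "summable (\<lambda>n. integral\<^sup>L lborel (\<lambda>y. norm (w a b n y)))"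
  proof (rule summable_comparison_test')
    show "summable (gamma_series_term \<alpha> (fps_nth (Abs_fps A * Abs_fps B)) (s + t) x)"
      unfolding A_def B_def by (rule gamma_series_cauchy_abs_summable[OF assms])
    have "integral\<^sup>L lborel (\<lambda>y. norm (w a b n y)) \<le> integral\<^sup>L lborel (w A B n)" for n
      using abs_w integrable_norm[OF int_w(1)] int_w(2) by (intro integral_mono) auto
    then show "norm (integral\<^sup>L lborel (\<lambda>y. norm (w a b n y)))
        \<le> gamma_series_term \<alpha> (fps_nth (Abs_fps A * Abs_fps B)) (s + t) x n" for n
      using integral_nonneg_AE[of "\<lambda>y. norm (w a b n y)" lborel] by (auto simp: integral_w(2))
  qed
  moreover have "AE y in lborel. summable (\<lambda>n. norm (w a b n y))"
  proof (rule AE_I2, rule summable_comparison_test')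
    have "gamma_series_abs_summable \<alpha> A s" "gamma_series_abs_summable \<alpha> B t"
      unfolding A_def B_def using assms by (auto intro: gamma_series_abs_summable_abs)
    then show "summable (\<lambda>n. w A B n y)" for y
      unfolding w_def by (rule sums_summable[OF gamma_series_cauchy_term_sums])
  qed (use abs_w in auto)
  moreover have "(\<lambda>y. gamma_series \<alpha> a s (x - y) * gamma_series \<alpha> b t y * indicator {0..x} y)
      = (\<lambda>y. \<Sum>n. w a b n y)"
    using gamma_series_cauchy_term_sums[OF assms(4,5)] by (auto simp: w_def sums_iff fun_eq_iff)
  ultimately show "integrable lborel
      (\<lambda>y. gamma_series \<alpha> a s (x - y) * gamma_series \<alpha> b t y * indicator {0..x} y)"
    and "integral\<^sup>L lborel (\<lambda>y. gamma_series \<alpha> a s (x - y) * gamma_series \<alpha> b t y * indicator {0..x} y)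
           = gamma_series \<alpha> (fps_nth (Abs_fps a * Abs_fps b)) (s + t) x"
    using integrable_suminf[OF int_w(1)] integral_suminf[OF int_w(1)]
    by (simp_all only: integral_w(1) gamma_series_def)
qed

lemma gamma_series_mult_nonneg:
  assumes "\<alpha> \<ge> 0" "s > 0" "t > 0" "gamma_series_abs_summable \<alpha> a s" "gamma_series_abs_summable \<alpha> b t"
    and "\<And>r. r \<ge> 0 \<Longrightarrow> gamma_series \<alpha> a s r \<ge> 0" "\<And>r. r \<ge> 0 \<Longrightarrow> gamma_series \<alpha> b t r \<ge> 0"
    and "x \<ge> 0"
  shows "gamma_series \<alpha> (fps_nth (Abs_fps a * Abs_fps b)) (s + t) x \<ge> 0"
proof (cases "x = 0")
  case False
  with assms have "x > 0"
    by simp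
  have "0 \<le> integral\<^sup>L lborel (\<lambda>y. gamma_series \<alpha> a s (x - y) * gamma_series \<alpha> b t y * indicator {0..x} y)"
    using assms(6,7) by (intro Bochner_Integration.integral_nonneg) (simp add: indicator_def)
  then show ?thesis
    using gamma_series_convolution(2)[OF assms(1-5) \<open>x > 0\<close>] by simp
qed simp

section \<open>Term-wise integration and distributions\<close>

lemma powr_kernel_integral:
  fixes c r :: real
  assumes "c > 0" "r \<ge> 0"
  shows "integrable lborel (\<lambda>x. x powr (c - 1) * indicator {0..r} x)"
    and "integral\<^sup>L lborel (\<lambda>x. x powr (c - 1) * indicator {0..r} x) = r powr c / c"
proof -
  have "((\<lambda>x. x powr (c - 1)) has_integral r powr c / c) {0..r}"
    using has_integral_powr_from_0[of "c - 1" r] assms by simp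
  then have "(\<integral>\<^sup>+x. ennreal (x powr (c - 1) * indicator {0..r} x) \<partial>lborel) = ennreal (r powr c / c)"
    by (subst nn_integral_has_integral_lebesgue'[symmetric])
      (auto intro!: nn_integral_cong simp: indicator_def)
  then show "integrable lborel (\<lambda>x. x powr (c - 1) * indicator {0..r} x)"
    and "integral\<^sup>L lborel (\<lambda>x. x powr (c - 1) * indicator {0..r} x) = r powr c / c"
    using assms by (subst (asm) nn_integral_eq_integrable; auto)+
qed

lemma gamma_series_term_integral:
  assumes "\<alpha> \<ge> 0" "s > 0" "r \<ge> 0"
  shows "integrable lborel (\<lambda>x. gamma_series_term \<alpha> a s x i * indicator {0..r} x)"
    and "integral\<^sup>L lborel (\<lambda>x. gamma_series_term \<alpha> a s x i * indicator {0..r} x)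
           = gamma_series_term \<alpha> a (s + 1) r i"
proof -
  define c where "c = \<alpha> * real i + s"
  have "c > 0"
    using assms by (simp add: c_def add_nonneg_pos)
  have eq: "(\<lambda>x. gamma_series_term \<alpha> a s x i * indicator {0..r} x)
      = (\<lambda>x. a i / Gamma c * (x powr (c - 1) * indicator {0..r} x))"
    by (simp add: fun_eq_iff gamma_series_term_def c_def)
  show "integrable lborel (\<lambda>x. gamma_series_term \<alpha> a s x i * indicator {0..r} x)"
    unfolding eq by (intro integrable_mult_right powr_kernel_integral(1) \<open>c > 0\<close> assms(3))
  show "integral\<^sup>L lborel (\<lambda>x. gamma_series_term \<alpha> a s x i * indicator {0..r} x)
      = gamma_series_term \<alpha> a (s + 1) r i"
    unfolding eq using \<open>c > 0\<close> Gamma_add_one_pos[OF \<open>c > 0\<close>] assms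
    by (simp add: powr_kernel_integral(2) gamma_series_term_def c_def add.assoc)
qed

lemma gamma_series_integral:
  assumes "\<alpha> \<ge> 0" "s > 0" "gamma_series_abs_summable \<alpha> a s" "r \<ge> 0"
  shows "integrable lborel (\<lambda>x. gamma_series \<alpha> a s x * indicator {0..r} x)"
    and "integral\<^sup>L lborel (\<lambda>x. gamma_series \<alpha> a s x * indicator {0..r} x) = gamma_series \<alpha> a (s + 1) r"
proof -
  define f where "f i x = gamma_series_term \<alpha> a s x i * indicator {0..r} x" for i x
  have int_f: "integrable lborel (f i)" for i
    unfolding f_def using gamma_series_term_integral(1)[OF assms(1,2,4)] .
  have norm_f: "norm (f i x) = gamma_series_term \<alpha> (\<lambda>i. \<bar>a i\<bar>) s x i * indicator {0..r} x" for i x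
    using assms by (cases "x \<in> {0..r}") (simp_all add: f_def abs_mult abs_gamma_series_term)
  have "summable (\<lambda>i. integral\<^sup>L lborel (\<lambda>x. norm (f i x)))"
    unfolding norm_f gamma_series_term_integral(2)[OF assms(1,2,4)]
    using assms by (intro summable_gamma_series_term gamma_series_abs_summable_add_one
        gamma_series_abs_summable_abs)
  moreover have "AE x in lborel. summable (\<lambda>i. norm (f i x))"
    using summable_norm_gamma_series_term[OF assms(3)]
    by (intro AE_I2) (auto simp: f_def indicator_def)
  moreover have "(\<lambda>x. gamma_series \<alpha> a s x * indicator {0..r} x) = (\<lambda>x. \<Sum>i. f i x)"
    using summable_gamma_series_term[OF assms(3)]
    by (auto simp: fun_eq_iff f_def gamma_series_def indicator_def)
  moreover have "(\<Sum>i. integral\<^sup>L lborel (f i)) = gamma_series \<alpha> a (s + 1) r"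
    unfolding f_def gamma_series_term_integral(2)[OF assms(1,2,4)] gamma_series_def ..
  ultimately show "integrable lborel (\<lambda>x. gamma_series \<alpha> a s x * indicator {0..r} x)"
    and "integral\<^sup>L lborel (\<lambda>x. gamma_series \<alpha> a s x * indicator {0..r} x) = gamma_series \<alpha> a (s + 1) r"
    using integrable_suminf[OF int_f] integral_suminf[OF int_f] by simp_all
qed

definition gamma_series_density :: "real \<Rightarrow> (nat \<Rightarrow> real) \<Rightarrow> real \<Rightarrow> real \<Rightarrow> ennreal" where
  "gamma_series_density \<alpha> a s r = ennreal (if 0 \<le> r then gamma_series \<alpha> a s r else 0)"

lemma (in prob_space) measure_le_gamma_series:
  assumes "\<alpha> \<ge> 0" "s > 0" "gamma_series_abs_summable \<alpha> a s"
    and "\<And>r. r \<ge> 0 \<Longrightarrow> gamma_series \<alpha> a s r \<ge> 0"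
    and "distributed M lborel X (gamma_series_density \<alpha> a s)" "r \<ge> 0"
  shows "measure M {\<omega> \<in> space M. X \<omega> \<le> r} = gamma_series \<alpha> a (s + 1) r"
proof -
  have nonneg: "gamma_series \<alpha> a s x * indicator {0..r} x \<ge> 0" for x
    using assms(4) by (simp add: indicator_def)
  have "emeasure M {\<omega> \<in> space M. X \<omega> \<le> r}
      = (\<integral>\<^sup>+x. gamma_series_density \<alpha> a s x * indicator {..r} x \<partial>lborel)"
    using distributed_emeasure[OF assms(5), of "{..r}"] by (simp add: vimage_def Int_def conj_commute)
  also have "\<dots> = (\<integral>\<^sup>+x. ennreal (gamma_series \<alpha> a s x * indicator {0..r} x) \<partial>lborel)"
    by (intro nn_integral_cong) (auto simp: gamma_series_density_def indicator_def)
  also have "\<dots> = ennreal (gamma_series \<alpha> a (s + 1) r)"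
    using gamma_series_integral[OF assms(1-3,6)] nonneg by (subst nn_integral_eq_integral) auto
  finally have "emeasure M {\<omega> \<in> space M. X \<omega> \<le> r} = ennreal (gamma_series \<alpha> a (s + 1) r)" .
  moreover have "gamma_series \<alpha> a (s + 1) r \<ge> 0"
    unfolding gamma_series_integral(2)[OF assms(1-3,6), symmetric]
    by (intro Bochner_Integration.integral_nonneg nonneg)
  ultimately show ?thesis
    by (simp add: measure_def)
qed

lemma convolution_gamma_series_density:
  assumes "\<alpha> \<ge> 0" "s > 0" "t > 0" "gamma_series_abs_summable \<alpha> a s" "gamma_series_abs_summable \<alpha> b t"
    and "\<And>r. r \<ge> 0 \<Longrightarrow> gamma_series \<alpha> a s r \<ge> 0" "\<And>r. r \<ge> 0 \<Longrightarrow> gamma_series \<alpha> b t r \<ge> 0"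
  shows "(\<integral>\<^sup>+y. gamma_series_density \<alpha> a s (x - y) * gamma_series_density \<alpha> b t y \<partial>lborel)
           = gamma_series_density \<alpha> (fps_nth (Abs_fps a * Abs_fps b)) (s + t) x"
proof -
  define F where "F y = gamma_series \<alpha> a s (x - y) * gamma_series \<alpha> b t y * indicator {0..x} y" for y
  have F_nonneg: "F y \<ge> 0" for y
    using assms(6,7) by (simp add: F_def indicator_def)
  have "gamma_series_density \<alpha> a s (x - y) * gamma_series_density \<alpha> b t y = ennreal (F y)" for y
  proof (cases "y \<in> {0..x}")
    case True
    then show ?thesis
      using assms(6,7) by (simp add: gamma_series_density_def F_def ennreal_mult)
  next
    case False
    then have "y < 0 \<or> x - y < 0"
      by auto
    then show ?thesis
      using False by (auto simp: gamma_series_density_def F_def)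
  qed
  then have "(\<integral>\<^sup>+y. gamma_series_density \<alpha> a s (x - y) * gamma_series_density \<alpha> b t y \<partial>lborel)
      = (\<integral>\<^sup>+y. ennreal (F y) \<partial>lborel)"
    by simp
  also have "\<dots> = gamma_series_density \<alpha> (fps_nth (Abs_fps a * Abs_fps b)) (s + t) x"
  proof (cases "x > 0")
    case True
    then show ?thesis
      using gamma_series_convolution[OF assms(1-5) True] F_nonneg
      by (simp add: nn_integral_eq_integral F_def[abs_def] gamma_series_density_def)
  next
    case False
    then have "F y = 0" for y
      by (cases "x = 0") (auto simp: F_def indicator_def)
    then show ?thesis
      using False by (simp add: gamma_series_density_def)
  qed
  finally show ?thesis .
qed

lemma (in prob_space) distributed_add_gamma_series:
  assumes "\<alpha> \<ge> 0" "s > 0" "t > 0" "gamma_series_abs_summable \<alpha> a s" "gamma_series_abs_summable \<alpha> b t"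
    and "\<And>r. r \<ge> 0 \<Longrightarrow> gamma_series \<alpha> a s r \<ge> 0" "\<And>r. r \<ge> 0 \<Longrightarrow> gamma_series \<alpha> b t r \<ge> 0"
    and "distributed M lborel X (gamma_series_density \<alpha> a s)"
    and "distributed M lborel Y (gamma_series_density \<alpha> b t)"
    and "indep_var borel X borel Y"
  shows "distributed M lborel (\<lambda>\<omega>. X \<omega> + Y \<omega>)
           (gamma_series_density \<alpha> (fps_nth (Abs_fps a * Abs_fps b)) (s + t))"
  using distributed_convolution[OF assms(10,8,9)]
  by (simp add: convolution_gamma_series_density[OF assms(1-7)])

lemma (in prob_space) distributed_sum_gamma_series:
  fixes a :: "'i \<Rightarrow> nat \<Rightarrow> real" and s :: "'i \<Rightarrow> real" and R :: "'i \<Rightarrow> 'a \<Rightarrow> real"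
  assumes "finite I" "I \<noteq> {}" "\<alpha> \<ge> 0"
    and "\<And>l. l \<in> I \<Longrightarrow> s l > 0"
    and "\<And>l. l \<in> I \<Longrightarrow> gamma_series_abs_summable \<alpha> (a l) (s l)"
    and "\<And>l r. l \<in> I \<Longrightarrow> r \<ge> 0 \<Longrightarrow> gamma_series \<alpha> (a l) (s l) r \<ge> 0"
    and "\<And>l. l \<in> I \<Longrightarrow> distributed M lborel (R l) (gamma_series_density \<alpha> (a l) (s l))"
    and "indep_vars (\<lambda>_. borel) R I"
  shows "distributed M lborel (\<lambda>\<omega>. \<Sum>l\<in>I. R l \<omega>)
           (gamma_series_density \<alpha> (fps_nth (\<Prod>l\<in>I. Abs_fps (a l))) (\<Sum>l\<in>I. s l))
         \<and> gamma_series_abs_summable \<alpha> (fps_nth (\<Prod>l\<in>I. Abs_fps (a l))) (\<Sum>l\<in>I. s l)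
         \<and> (\<forall>r\<ge>0. gamma_series \<alpha> (fps_nth (\<Prod>l\<in>I. Abs_fps (a l))) (\<Sum>l\<in>I. s l) r \<ge> 0)"
  using assms(1,2,4-8)
proof (induction I rule: finite_ne_induct)
  case (singleton l)
  then show ?case
    by (simp add: fps_nth_Abs_fps[abs_def])
next
  case (insert l I)
  let ?c = "fps_nth (\<Prod>k\<in>I. Abs_fps (a k))"
  have "distributed M lborel (\<lambda>\<omega>. \<Sum>k\<in>I. R k \<omega>) (gamma_series_density \<alpha> ?c (\<Sum>k\<in>I. s k))
      \<and> gamma_series_abs_summable \<alpha> ?c (\<Sum>k\<in>I. s k)
      \<and> (\<forall>r\<ge>0. gamma_series \<alpha> ?c (\<Sum>k\<in>I. s k) r \<ge> 0)"
    by (rule insert.IH) (use insert.prems in \<open>auto intro: indep_vars_subset\<close>)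
  then have IH: "distributed M lborel (\<lambda>\<omega>. \<Sum>k\<in>I. R k \<omega>) (gamma_series_density \<alpha> ?c (\<Sum>k\<in>I. s k))"
    "gamma_series_abs_summable \<alpha> ?c (\<Sum>k\<in>I. s k)"
    "\<And>r. r \<ge> 0 \<Longrightarrow> gamma_series \<alpha> ?c (\<Sum>k\<in>I. s k) r \<ge> 0"
    by auto
  have "(\<Sum>k\<in>I. s k) > 0"
    using insert by (intro sum_pos) auto
  moreover have "indep_var borel (R l) borel (\<lambda>\<omega>. \<Sum>k\<in>I. R k \<omega>)"
    using insert by (intro indep_vars_sum) auto
  ultimately have
    "distributed M lborel (\<lambda>\<omega>. R l \<omega> + (\<Sum>k\<in>I. R k \<omega>))
       (gamma_series_density \<alpha> (fps_nth (Abs_fps (a l) * Abs_fps ?c)) (s l + (\<Sum>k\<in>I. s k)))"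
    "gamma_series_abs_summable \<alpha> (fps_nth (Abs_fps (a l) * Abs_fps ?c)) (s l + (\<Sum>k\<in>I. s k))"
    "\<forall>r\<ge>0. gamma_series \<alpha> (fps_nth (Abs_fps (a l) * Abs_fps ?c)) (s l + (\<Sum>k\<in>I. s k)) r \<ge> 0"
    using insert.prems IH assms(3)
    by (auto intro!: distributed_add_gamma_series gamma_series_abs_summable_mult gamma_series_mult_nonneg)
  then show ?case
    using insert by (simp add: fps_nth_inverse)
qed

lemma (in prob_space) distributed_gamma_series_cmult:
  assumes "\<alpha> \<ge> 0" "s > 0" "C > 0"
    and "distributed M lborel X (gamma_series_density \<alpha> (\<lambda>i. C * d i) s)"
    and "gamma_series_abs_summable \<alpha> (\<lambda>i. C * d i) s"
    and "\<And>r. r \<ge> 0 \<Longrightarrow> gamma_series \<alpha> (\<lambda>i. C * d i) s r \<ge> 0"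
  shows "\<And>r. r \<ge> 0 \<Longrightarrow> summable (gamma_series_term \<alpha> d s r) \<and> summable (gamma_series_term \<alpha> d (s + 1) r)"
    and "distributed M lborel X (\<lambda>r. ennreal (if 0 \<le> r then C * gamma_series \<alpha> d s r else 0))"
    and "\<And>r. r \<ge> 0 \<Longrightarrow> measure M {\<omega> \<in> space M. X \<omega> \<le> r} = C * gamma_series \<alpha> d (s + 1) r"
proof -
  have "gamma_series_abs_summable \<alpha> d s"
    using assms(3,5) by (simp add: gamma_series_abs_summable_cmult_iff)
  then show summable: "summable (gamma_series_term \<alpha> d s r) \<and> summable (gamma_series_term \<alpha> d (s + 1) r)"
    if "r \<ge> 0" for r
    using assms(1,2) that by (auto intro!: summable_gamma_series_term gamma_series_abs_summable_add_one)
  have "gamma_series_density \<alpha> (\<lambda>i. C * d i) s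
      = (\<lambda>r. ennreal (if 0 \<le> r then C * gamma_series \<alpha> d s r else 0))"
    using summable by (simp add: fun_eq_iff gamma_series_density_def gamma_series_cmult)
  then show "distributed M lborel X (\<lambda>r. ennreal (if 0 \<le> r then C * gamma_series \<alpha> d s r else 0))"
    using assms(4) by simp
  show "measure M {\<omega> \<in> space M. X \<omega> \<le> r} = C * gamma_series \<alpha> d (s + 1) r" if "r \<ge> 0" for r
    using measure_le_gamma_series[OF assms(1,2,5,6,4) that] summable[OF that]
    by (simp add: gamma_series_cmult)
qed

section \<open>The densities of the R_l as Gamma series\<close>

lemma exp_term_times_pdf_l_term:
  fixes \<alpha> T rh r :: real
  assumes "r > 0" "rh > 0" "j \<le> n"
  shows "(- (r powr \<alpha> / rh powr \<alpha>)) ^ (n - j) / fact (n - j)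
           * (ph j * r powr (\<alpha> * (real j + T) - 1) / (rh powr (\<alpha> * (real j + T)) * Gamma (real j + T)))
         = (-1) ^ (n - j) * ph j / (fact (n - j) * Gamma (real j + T))
           * (r powr (\<alpha> * (real n + T) - 1) / rh powr (\<alpha> * (real n + T)))"
proof -
  have "(- (r powr \<alpha> / rh powr \<alpha>)) ^ (n - j) = (-1) ^ (n - j) * ((r powr \<alpha>) ^ (n - j) / (rh powr \<alpha>) ^ (n - j))"
    by (simp only: power_minus[of "r powr \<alpha> / rh powr \<alpha>"] power_divide)
  also have "\<dots> = (-1) ^ (n - j) * (r powr (real (n - j) * \<alpha>) / rh powr (real (n - j) * \<alpha>))"
    using assms by (simp only: powr_power less_imp_neq[symmetric] not_False_eq_True)
  finally have power: "(- (r powr \<alpha> / rh powr \<alpha>)) ^ (n - j)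
      = (-1) ^ (n - j) * (r powr (real (n - j) * \<alpha>) / rh powr (real (n - j) * \<alpha>))" .
  have "real (n - j) * \<alpha> + (\<alpha> * (real j + T) - 1) = \<alpha> * (real n + T) - 1"
    and "real (n - j) * \<alpha> + \<alpha> * (real j + T) = \<alpha> * (real n + T)"
    using assms by (simp_all add: of_nat_diff algebra_simps)
  then have "r powr (real (n - j) * \<alpha>) * r powr (\<alpha> * (real j + T) - 1) = r powr (\<alpha> * (real n + T) - 1)"
    and "rh powr (real (n - j) * \<alpha>) * rh powr (\<alpha> * (real j + T)) = rh powr (\<alpha> * (real n + T))"
    by (simp_all only: powr_add[symmetric])
  moreover have "\<And>c A B f p C D G :: real. c * (A / B) / f * (p * C / (D * G))
      = c * p / (f * G) * (A * C / (B * D))"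
    by (simp add: divide_inverse mult_ac)
  ultimately show ?thesis
    by (simp only: power)
qed

lemma gamma_series_term_lam_coef:
  fixes \<alpha> T rh r :: real
  assumes "\<alpha> > 0" "T > 0" "rh > 0"
  shows "gamma_series_term \<alpha> (\<lambda>i. \<alpha> * rh powr (- \<alpha> * T) * lam_coef \<alpha> T rh ph i) (\<alpha> * T) r n
    = \<alpha> * (r powr (\<alpha> * (real n + T) - 1) / rh powr (\<alpha> * (real n + T)))
        * (\<Sum>j\<le>n. (-1) ^ (n - j) * ph j / (fact (n - j) * Gamma (real j + T)))"
proof -
  have "\<alpha> * (real n + T) > 0"
    using assms by (simp add: add_nonneg_pos)
  then have "Gamma (\<alpha> * (real n + T)) \<noteq> 0"
    by (simp add: Gamma_real_pos less_imp_neq[symmetric])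
  have exponent: "\<alpha> * real n + \<alpha> * T = \<alpha> * (real n + T)"
    by (simp add: algebra_simps)
  define S where "S = (\<Sum>j\<le>n. (-1) ^ (n - j) * ph j / (fact (n - j) * Gamma (real j + T)))"
  have "gamma_series_term \<alpha> (\<lambda>i. \<alpha> * rh powr (- \<alpha> * T) * lam_coef \<alpha> T rh ph i) (\<alpha> * T) r n
      = \<alpha> * inverse (rh powr (\<alpha> * T)) * (Gamma (\<alpha> * (real n + T)) / rh powr (\<alpha> * real n) * S)
        * r powr (\<alpha> * (real n + T) - 1) / Gamma (\<alpha> * (real n + T))"
    unfolding gamma_series_term_def lam_coef_def exponent S_def by (simp only: mult_minus_left powr_minus)
  also have "\<dots> = \<alpha> * (r powr (\<alpha> * (real n + T) - 1) / (rh powr (\<alpha> * real n) * rh powr (\<alpha> * T))) * S"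
    using \<open>Gamma (\<alpha> * (real n + T)) \<noteq> 0\<close> by (simp add: divide_inverse ac_simps)
  also have "rh powr (\<alpha> * real n) * rh powr (\<alpha> * T) = rh powr (\<alpha> * (real n + T))"
    by (simp only: exponent[symmetric] powr_add)
  finally show ?thesis
    unfolding S_def .
qed

lemma gamma_series_term_lam_coef_eq_cauchy_product:
  fixes \<alpha> T rh r :: real and ph :: "nat \<Rightarrow> real"
  assumes "\<alpha> > 0" "T > 0" "rh > 0" "r > 0"
  defines "e \<equiv> \<lambda>k. (- (r powr \<alpha> / rh powr \<alpha>)) ^ k / fact k"
    and "p \<equiv> \<lambda>j. ph j * r powr (\<alpha> * (real j + T) - 1) / (rh powr (\<alpha> * (real j + T)) * Gamma (real j + T))"
  shows "gamma_series_term \<alpha> (\<lambda>i. \<alpha> * rh powr (- \<alpha> * T) * lam_coef \<alpha> T rh ph i) (\<alpha> * T) r n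
           = \<alpha> * (\<Sum>k\<le>n. e k * p (n - k))"
proof -
  have "(\<Sum>k\<le>n. e k * p (n - k)) = (\<Sum>j\<le>n. e (n - j) * p j)"
    by (rule sum.reindex_bij_witness[of _ "\<lambda>j. n - j" "\<lambda>k. n - k"]) auto
  also have "\<dots> = (\<Sum>j\<le>n. (-1) ^ (n - j) * ph j / (fact (n - j) * Gamma (real j + T))
                      * (r powr (\<alpha> * (real n + T) - 1) / rh powr (\<alpha> * (real n + T))))"
    unfolding e_def p_def using assms by (intro sum.cong refl exp_term_times_pdf_l_term) auto
  finally show ?thesis
    unfolding gamma_series_term_lam_coef[OF assms(1-3)] sum_distrib_right[symmetric]
    by (simp only: ac_simps)
qed

lemma pdf_l_eq_gamma_series:
  fixes \<alpha> T rh r :: real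
  assumes "\<alpha> > 0" "T > 0" "rh > 0" "r > 0"
    and "summable (\<lambda>i. \<bar>ph i * r powr (\<alpha> * (real i + T) - 1) /
                     (rh powr (\<alpha> * (real i + T)) * Gamma (real i + T))\<bar>)"
  defines "a \<equiv> \<lambda>i. \<alpha> * rh powr (- \<alpha> * T) * lam_coef \<alpha> T rh ph i"
  shows "pdf_l \<alpha> T rh ph r = gamma_series \<alpha> a (\<alpha> * T) r"
    and "summable (\<lambda>i. \<bar>gamma_series_term \<alpha> a (\<alpha> * T) r i\<bar>)"
proof -
  define x where "x = - (r powr \<alpha> / rh powr \<alpha>)"
  define e where "e k = x ^ k / fact k" for k
  define p where "p j = ph j * r powr (\<alpha> * (real j + T) - 1)
                          / (rh powr (\<alpha> * (real j + T)) * Gamma (real j + T))" for j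
  have e_exp: "e k = x ^ k /\<^sub>R fact k" for k
    by (simp add: e_def divide_inverse mult.commute)
  have summable_e: "summable (\<lambda>k. norm (e k))"
    unfolding e_exp by (rule summable_norm_exp)
  have summable_p: "summable (\<lambda>k. norm (p k))"
    using assms(5) by (simp add: p_def)
  have cauchy_term: "\<alpha> * (\<Sum>k\<le>n. e k * p (n - k)) = gamma_series_term \<alpha> a (\<alpha> * T) r n" for n
    unfolding a_def e_def x_def p_def using gamma_series_term_lam_coef_eq_cauchy_product[OF assms(1-4)]
    by simp
  have "exp x = suminf e"
    unfolding e_exp using exp_converges[of x] by (simp add: sums_iff)
  then have "exp (- (r powr \<alpha>) / rh powr \<alpha>) = suminf e"
    by (simp add: x_def)
  then have "pdf_l \<alpha> T rh ph r = \<alpha> * (suminf e * suminf p)"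
    by (simp add: pdf_l_def p_def[abs_def])
  also have "\<dots> = (\<Sum>n. \<alpha> * (\<Sum>k\<le>n. e k * p (n - k)))"
    using summable_e summable_p by (simp add: Cauchy_product suminf_mult summable_Cauchy_product)
  finally show "pdf_l \<alpha> T rh ph r = gamma_series \<alpha> a (\<alpha> * T) r"
    by (simp only: cauchy_term gamma_series_def)
  show "summable (\<lambda>i. \<bar>gamma_series_term \<alpha> a (\<alpha> * T) r i\<bar>)"
  proof (rule summable_comparison_test')
    show "summable (\<lambda>n. \<alpha> * (\<Sum>k\<le>n. norm (e k) * norm (p (n - k))))"
      using summable_e summable_p by (intro summable_mult summable_Cauchy_product) simp_all
    show "norm \<bar>gamma_series_term \<alpha> a (\<alpha> * T) r n\<bar> \<le> \<alpha> * (\<Sum>k\<le>n. norm (e k) * norm (p (n - k)))" for n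
      unfolding cauchy_term[symmetric] using assms(1)
      by (auto simp: abs_mult norm_mult intro!: mult_left_mono order_trans[OF sum_abs])
  qed
qed

lemma pdf_l_gamma_series_density:
  fixes \<alpha> T rh :: real
  assumes "\<alpha> > 0" "T > 0" "rh > 0"
    and "\<forall>r\<ge>0. summable (\<lambda>i. \<bar>ph i * r powr (\<alpha> * (real i + T) - 1) /
                     (rh powr (\<alpha> * (real i + T)) * Gamma (real i + T))\<bar>)"
  defines "a \<equiv> \<lambda>i. \<alpha> * rh powr (- \<alpha> * T) * lam_coef \<alpha> T rh ph i"
  shows "gamma_series_abs_summable \<alpha> a (\<alpha> * T)"
    and "\<And>r. r \<ge> 0 \<Longrightarrow> gamma_series \<alpha> a (\<alpha> * T) r = pdf_l \<alpha> T rh ph r"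
    and "(\<lambda>r. ennreal (if 0 \<le> r then pdf_l \<alpha> T rh ph r else 0)) = gamma_series_density \<alpha> a (\<alpha> * T)"
proof -
  show "gamma_series_abs_summable \<alpha> a (\<alpha> * T)"
    unfolding gamma_series_abs_summable_def a_def
  proof (intro allI impI)
    fix r :: real
    assume "r > 0"
    then show "summable (\<lambda>i. \<bar>gamma_series_term \<alpha> (\<lambda>i. \<alpha> * rh powr (- \<alpha> * T) * lam_coef \<alpha> T rh ph i)
                                 (\<alpha> * T) r i\<bar>)"
      using assms(4) by (intro pdf_l_eq_gamma_series(2)[OF assms(1-3)]) auto
  qed
  show pdf: "gamma_series \<alpha> a (\<alpha> * T) r = pdf_l \<alpha> T rh ph r" if "r \<ge> 0" for r
  proof (cases "r = 0")
    case False
    then show ?thesis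
      unfolding a_def using assms that by (simp add: pdf_l_eq_gamma_series(1))
  qed (simp add: pdf_l_def)
  then show "(\<lambda>r. ennreal (if 0 \<le> r then pdf_l \<alpha> T rh ph r else 0)) = gamma_series_density \<alpha> a (\<alpha> * T)"
    by (simp add: fun_eq_iff gamma_series_density_def)
qed

lemma (in prob_space) distributed_sum_pdf_l_gamma_series:
  fixes ph :: "nat \<Rightarrow> 'i \<Rightarrow> real" and R :: "'i \<Rightarrow> 'a \<Rightarrow> real"
  assumes "finite I" "I \<noteq> {}" "\<alpha> > 0"
    and "\<forall>l\<in>I. T l > 0 \<and> rh l > 0"
    and "\<forall>l\<in>I. \<forall>r\<ge>0. summable (\<lambda>i. \<bar>ph i l * r powr (\<alpha> * (real i + T l) - 1) /
                (rh l powr (\<alpha> * (real i + T l)) * Gamma (real i + T l))\<bar>)"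
    and "\<forall>l\<in>I. \<forall>r\<ge>0. pdf_l \<alpha> (T l) (rh l) (\<lambda>i. ph i l) r \<ge> 0"
    and "\<forall>l\<in>I. distributed M lborel (R l)
            (\<lambda>r. ennreal (if 0 \<le> r then pdf_l \<alpha> (T l) (rh l) (\<lambda>i. ph i l) r else 0))"
    and "indep_vars (\<lambda>_. borel) R I"
  defines "a \<equiv> \<lambda>l i. \<alpha> * rh l powr (- \<alpha> * T l) * lam_coef \<alpha> (T l) (rh l) (\<lambda>j. ph j l) i"
  shows "distributed M lborel (\<lambda>\<omega>. \<Sum>l\<in>I. R l \<omega>)
           (gamma_series_density \<alpha> (fps_nth (\<Prod>l\<in>I. Abs_fps (a l))) (\<alpha> * (\<Sum>l\<in>I. T l)))
         \<and> gamma_series_abs_summable \<alpha> (fps_nth (\<Prod>l\<in>I. Abs_fps (a l))) (\<alpha> * (\<Sum>l\<in>I. T l))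
         \<and> (\<forall>r\<ge>0. gamma_series \<alpha> (fps_nth (\<Prod>l\<in>I. Abs_fps (a l))) (\<alpha> * (\<Sum>l\<in>I. T l)) r \<ge> 0)"
proof -
  have pdf: "gamma_series_abs_summable \<alpha> (a l) (\<alpha> * T l)"
    "\<And>r. r \<ge> 0 \<Longrightarrow> gamma_series \<alpha> (a l) (\<alpha> * T l) r = pdf_l \<alpha> (T l) (rh l) (\<lambda>i. ph i l) r"
    "(\<lambda>r. ennreal (if 0 \<le> r then pdf_l \<alpha> (T l) (rh l) (\<lambda>i. ph i l) r else 0))
       = gamma_series_density \<alpha> (a l) (\<alpha> * T l)" if "l \<in> I" for l
  proof -
    have hyps: "T l > 0" "rh l > 0" "\<forall>r\<ge>0. summable (\<lambda>i. \<bar>ph i l * r powr (\<alpha> * (real i + T l) - 1) /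
        (rh l powr (\<alpha> * (real i + T l)) * Gamma (real i + T l))\<bar>)"
      using assms(4,5) that by auto
    show "gamma_series_abs_summable \<alpha> (a l) (\<alpha> * T l)"
      "\<And>r. r \<ge> 0 \<Longrightarrow> gamma_series \<alpha> (a l) (\<alpha> * T l) r = pdf_l \<alpha> (T l) (rh l) (\<lambda>i. ph i l) r"
      "(\<lambda>r. ennreal (if 0 \<le> r then pdf_l \<alpha> (T l) (rh l) (\<lambda>i. ph i l) r else 0))
         = gamma_series_density \<alpha> (a l) (\<alpha> * T l)"
      unfolding a_def by (fact pdf_l_gamma_series_density[OF assms(3) hyps])+
  qed
  then show ?thesis
    using distributed_sum_gamma_series[of I \<alpha> "\<lambda>l. \<alpha> * T l" a R] assms(1-8)
    by (auto simp: sum_distrib_left[symmetric])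
qed

lemma (in prob_space) distributed_sum_pdf_l_delta_coef:
  fixes ph :: "nat \<Rightarrow> 'i \<Rightarrow> real" and R :: "'i \<Rightarrow> 'a \<Rightarrow> real"
  assumes "finite I" "I \<noteq> {}" "\<alpha> > 0"
    and "\<forall>l\<in>I. T l > 0 \<and> rh l > 0"
    and "\<forall>l\<in>I. \<forall>r\<ge>0. summable (\<lambda>i. \<bar>ph i l * r powr (\<alpha> * (real i + T l) - 1) /
                (rh l powr (\<alpha> * (real i + T l)) * Gamma (real i + T l))\<bar>)"
    and "\<forall>l\<in>I. \<forall>r\<ge>0. pdf_l \<alpha> (T l) (rh l) (\<lambda>i. ph i l) r \<ge> 0"
    and "\<forall>l\<in>I. distributed M lborel (R l)
            (\<lambda>r. ennreal (if 0 \<le> r then pdf_l \<alpha> (T l) (rh l) (\<lambda>i. ph i l) r else 0))"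
    and "indep_vars (\<lambda>_. borel) R I"
    and "\<forall>l\<in>I. lam_coef \<alpha> (T l) (rh l) (\<lambda>i. ph i l) 0 \<noteq> 0"
  defines "\<delta> \<equiv> delta_coef (\<Prod>l\<in>I. lam_coef \<alpha> (T l) (rh l) (\<lambda>j. ph j l) 0)
                 (\<lambda>h. \<Sum>l\<in>I. phi_coef (lam_coef \<alpha> (T l) (rh l) (\<lambda>j. ph j l)) h)"
    and "C \<equiv> \<alpha> ^ card I * (\<Prod>l\<in>I. rh l powr (- \<alpha> * T l))"
    and "s \<equiv> \<alpha> * (\<Sum>l\<in>I. T l)"
  shows "\<And>r. r \<ge> 0 \<Longrightarrow> summable (gamma_series_term \<alpha> \<delta> s r) \<and> summable (gamma_series_term \<alpha> \<delta> (s + 1) r)"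
    and "distributed M lborel (\<lambda>\<omega>. \<Sum>l\<in>I. R l \<omega>)
           (\<lambda>r. ennreal (if 0 \<le> r then C * gamma_series \<alpha> \<delta> s r else 0))"
    and "\<And>r. r \<ge> 0 \<Longrightarrow> measure M {\<omega> \<in> space M. (\<Sum>l\<in>I. R l \<omega>) \<le> r} = C * gamma_series \<alpha> \<delta> (s + 1) r"
proof -
  have "C > 0"
    unfolding C_def using assms(3,4) by (intro mult_pos_pos prod_pos) force+
  have "s > 0"
    unfolding s_def using assms(1-4) by (intro mult_pos_pos sum_pos) auto
  have "fps_nth (\<Prod>l\<in>I. Abs_fps (\<lambda>i. \<alpha> * rh l powr (- \<alpha> * T l) * lam_coef \<alpha> (T l) (rh l) (\<lambda>j. ph j l) i))
      = (\<lambda>i. C * \<delta> i)"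
    using fps_nth_prod_cmult_eq_delta_coef[of I "\<lambda>l. lam_coef \<alpha> (T l) (rh l) (\<lambda>j. ph j l)"] assms(1,9)
    by (simp add: fun_eq_iff \<delta>_def C_def prod.distrib)
  then have "distributed M lborel (\<lambda>\<omega>. \<Sum>l\<in>I. R l \<omega>) (gamma_series_density \<alpha> (\<lambda>i. C * \<delta> i) s)
      \<and> gamma_series_abs_summable \<alpha> (\<lambda>i. C * \<delta> i) s
      \<and> (\<forall>r\<ge>0. gamma_series \<alpha> (\<lambda>i. C * \<delta> i) s r \<ge> 0)"
    using distributed_sum_pdf_l_gamma_series[OF assms(1-8)] by (simp add: s_def)
  then show "\<And>r. r \<ge> 0 \<Longrightarrow> summable (gamma_series_term \<alpha> \<delta> s r) \<and> summable (gamma_series_term \<alpha> \<delta> (s + 1) r)"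
    and "distributed M lborel (\<lambda>\<omega>. \<Sum>l\<in>I. R l \<omega>)
           (\<lambda>r. ennreal (if 0 \<le> r then C * gamma_series \<alpha> \<delta> s r else 0))"
    and "\<And>r. r \<ge> 0 \<Longrightarrow> measure M {\<omega> \<in> space M. (\<Sum>l\<in>I. R l \<omega>) \<le> r} = C * gamma_series \<alpha> \<delta> (s + 1) r"
    using distributed_gamma_series_cmult[of \<alpha> s C] assms(3) \<open>C > 0\<close> \<open>s > 0\<close> by auto
qed

theorem proposition2:
  fixes M :: "'a measure"
    and L :: nat
    and \<alpha> :: real
    and T rh :: "nat \<Rightarrow> real"
    and ph :: "nat \<Rightarrow> nat \<Rightarrow> real"   (* ph i l = varphi_{i,l} *)
    and R :: "nat \<Rightarrow> 'a \<Rightarrow> real"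
  assumes "prob_space M"
    and "L \<ge> 1"
    and "\<alpha> > 0"
    and "\<forall>l\<in>{1..L}. T l > 0 \<and> rh l > 0"
    and "\<forall>l\<in>{1..L}. \<forall>r\<ge>0. summable (\<lambda>i. \<bar>ph i l * r powr (\<alpha> * (real i + T l) - 1) /
                (rh l powr (\<alpha> * (real i + T l)) * Gamma (real i + T l))\<bar>)"
    and "\<forall>l\<in>{1..L}. \<forall>r\<ge>0. pdf_l \<alpha> (T l) (rh l) (\<lambda>i. ph i l) r \<ge> 0"
    and "\<forall>l\<in>{1..L}. distributed M lborel (R l)
            (\<lambda>r. ennreal (if 0 \<le> r then pdf_l \<alpha> (T l) (rh l) (\<lambda>i. ph i l) r else 0))"
    and "prob_space.indep_vars M (\<lambda>_. borel) R {1..L}"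
    and "\<forall>l\<in>{1..L}. lam_coef \<alpha> (T l) (rh l) (\<lambda>i. ph i l) 0 \<noteq> 0"
  shows
    "let lam = (\<lambda>i l. lam_coef \<alpha> (T l) (rh l) (\<lambda>j. ph j l) i);
         \<delta> = delta_coef (\<Prod>l=1..L. lam 0 l)
               (\<lambda>h. \<Sum>l=1..L. phi_coef (\<lambda>i. lam i l) h);
         Ts = (\<Sum>l=1..L. T l);
         C = \<alpha> ^ L * (\<Prod>l=1..L. rh l powr (- \<alpha> * T l));
         fterm = (\<lambda>r i. \<delta> i * r powr (-1 + \<alpha> * real i + \<alpha> * Ts) / Gamma (real i * \<alpha> + \<alpha> * Ts));
         Fterm = (\<lambda>r i. \<delta> i * r powr (\<alpha> * real i + \<alpha> * Ts) / Gamma (1 + real i * \<alpha> + \<alpha> * Ts))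
     in (\<forall>r\<ge>0. summable (fterm r) \<and> summable (Fterm r))
        \<and> distributed M lborel (\<lambda>\<omega>. \<Sum>l=1..L. R l \<omega>)
            (\<lambda>r. ennreal (if 0 \<le> r then C * (\<Sum>i. fterm r i) else 0))
        \<and> (\<forall>r\<ge>0. measure M {\<omega> \<in> space M. (\<Sum>l=1..L. R l \<omega>) \<le> r} = C * (\<Sum>i. Fterm r i))"
proof -
  interpret prob_space M
    by (rule assms(1))
  have fterm: "(\<lambda>i. \<delta> i * r powr (-1 + \<alpha> * real i + \<alpha> * Ts) / Gamma (real i * \<alpha> + \<alpha> * Ts))
      = gamma_series_term \<alpha> \<delta> (\<alpha> * Ts) r"
    and Fterm: "(\<lambda>i. \<delta> i * r powr (\<alpha> * real i + \<alpha> * Ts) / Gamma (1 + real i * \<alpha> + \<alpha> * Ts))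
      = gamma_series_term \<alpha> \<delta> (\<alpha> * Ts + 1) r" for \<delta> Ts r
    by (simp_all add: fun_eq_iff gamma_series_term_def algebra_simps)
  show ?thesis
    using distributed_sum_pdf_l_delta_coef[of "{1..L}" \<alpha> T rh ph R] assms(2-9)
    unfolding Let_def gamma_series_def fterm Fterm card_atLeastAtMost diff_Suc_1 by auto
qed

end
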